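(* Let $\gamma_1,\gamma_2>0$ and consider the birth-death chain RDS $(\theta,\varphi)$ on $\mathbb{N}_0$ described in the context. For every $(x_0,y_0)\in\mathbb{N}_0^2$, the two-point motion $(\varphi^n_q(x_0),\varphi^n_q(y_0))_{n\in\mathbb{N}_0}$ reaches the thick diagonal $\mathbb{D}:=\{(x,y)\in\mathbb{N}_0^2: y\in\{x-1,x,x+1\}\}$ in finite time $\mathbb{P}$-almost surely, i.e. $\mathbb{P}\big(\exists n\geq0: (\varphi^n_q(x_0),\varphi^n_q(y_0))\in\mathbb{D}\big)=1$.
   Context: Noise space: $\mathcal{Q}_+=\{q=(q_n)_{n\in\mathbb{N}_0}: q_n\in[0,1]\}$ with the product Borel $\sigma$-algebra and the product measure $\mathbb{P}=\lambda^{\mathbb{N}_0}$, $\lambda$ Lebesgue measure on $[0,1]$; shift $\theta(q_0,q_1,\dots)=(q_1,q_2,\dots)$. For $q\in\mathcal{Q}_+$ define $f_q:\mathbb{N}_0\to\mathbb{N}_0$ by $f_q(x)=x+1$ if $q_0<\frac{\gamma_1}{\gamma_1+\gamma_2x}$ and $f_q(x)=x-1$ otherwise. The cocycle is $\varphi^0_q(x)=x$ and $\varphi^n_q(x)=f_{\theta^{n-1}q}\circ\cdots\circ f_q(x)$ for $n\geq1$. The pair $(\varphi^n_q(x_0),\varphi^n_q(y_0))_n$ with the same $q$ is called the two-point motion. *)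

theory Defs
  imports "HOL-Probability.Probability"
begin

definition noise :: "(nat \<Rightarrow> real) measure" where
  "noise = (\<Pi>\<^sub>M n\<in>(UNIV::nat set). uniform_measure lborel {0..1::real})"

definition theta :: "(nat \<Rightarrow> real) \<Rightarrow> (nat \<Rightarrow> real)" where
  "theta q = (\<lambda>n. q (Suc n))"

text \<open>One step of the birth-death chain (x - 1 is truncated subtraction on nat;
  the only case where this matters, x = 0 and q 0 = 1, is a null event).\<close>
definition bd_step :: "real \<Rightarrow> real \<Rightarrow> (nat \<Rightarrow> real) \<Rightarrow> nat \<Rightarrow> nat" where
  "bd_step \<gamma>1 \<gamma>2 q x = (if q 0 < \<gamma>1 / (\<gamma>1 + \<gamma>2 * real x) then x + 1 else x - 1)"

fun bd_cocycle :: "real \<Rightarrow> real \<Rightarrow> nat \<Rightarrow> (nat \<Rightarrow> real) \<Rightarrow> nat \<Rightarrow> nat" where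
  "bd_cocycle \<gamma>1 \<gamma>2 0 q x = x"
| "bd_cocycle \<gamma>1 \<gamma>2 (Suc n) q x = bd_step \<gamma>1 \<gamma>2 ((theta ^^ n) q) (bd_cocycle \<gamma>1 \<gamma>2 n q x)"

definition thick_diag :: "(nat \<times> nat) set" where
  "thick_diag = {(x, y). int y \<in> {int x - 1, int x, int x + 1}}"

end

theory Submission
  imports Defs
begin

text \<open>Let G x y be the probability that the two-point motion started at (x, y) never enters the
  thick diagonal, and let p z = \<gamma>1 / (\<gamma>1 + \<gamma>2 z) be the probability of an up-step at z.
  Conditioning on the first noise coordinate shows that G is harmonic for the two-point chain at
  every x + 2 \<le> y: both points are driven by the same uniform variable, so both move up
  (probability p y), the lower point moves up and the upper one down (probability p x - p y > 0),
  or both move down.  G vanishes on the thick diagonal and is bounded by 1.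

  A maximum principle then forces G = 0.  If a subharmonic function attains its maximum over
  {x \<le> y} at a point, it also attains it after the move of positive weight p x - p y, which
  shrinks the gap; iterating, the maximum is attained on the thick diagonal or in a region y < B.
  As p y \<le> 1/2 for y \<ge> B = \<lceil>\<gamma>1 / \<gamma>2\<rceil>, the function y is superharmonic there, so
  G - \<epsilon> y is subharmonic for large y and tends to -\<infinity>; it therefore attains its maximum,
  whence G - \<epsilon> y \<le> max ({0} \<union> {G x y | y < B}).  Letting \<epsilon> \<rightarrow> 0, the supremum of G is
  attained in a finite region, so it propagates to the diagonal and is 0.\<close>

abbreviation unif01 :: "real measure" where
  "unif01 \<equiv> uniform_measure lborel {0..1}"

lemma prob_space_unif01: "prob_space unif01"
  by (rule prob_space_uniform_measure) auto

lemma sequence_space_unif01: "sequence_space unif01"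
  unfolding sequence_space_def by (rule product_prob_spaceI) (rule prob_space_unif01)

lemma prob_space_noise: "prob_space noise"
  unfolding noise_def by (rule prob_space_PiM) (rule prob_space_unif01)

lemma space_noise [simp]: "space noise = UNIV"
  by (simp add: noise_def space_PiM)

lemma nn_integral_unif01_step:
  fixes a b u v w :: real
  assumes "0 \<le> a" "a \<le> b" "b \<le> 1" and "0 \<le> u" "0 \<le> v" "0 \<le> w"
  shows "(\<integral>\<^sup>+ s. ennreal (if s < a then u else if s < b then v else w) \<partial>unif01)
           = ennreal (a * u + (b - a) * v + (1 - b) * w)"
proof -
  have "AE s in unif01. ennreal (if s < a then u else if s < b then v else w)
          = ennreal u * indicator {0..<a} s + ennreal v * indicator {a..<b} s
            + ennreal w * indicator {b..1} s"
    using assms by (intro AE_uniform_measureI AE_I2) (auto simp: indicator_def)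
  then have "(\<integral>\<^sup>+ s. ennreal (if s < a then u else if s < b then v else w) \<partial>unif01)
      = (\<integral>\<^sup>+ s. ennreal u * indicator {0..<a} s + ennreal v * indicator {a..<b} s
             + ennreal w * indicator {b..1} s \<partial>unif01)"
    by (rule nn_integral_cong_AE)
  also have "\<dots> = ennreal u * emeasure unif01 {0..<a} + ennreal v * emeasure unif01 {a..<b}
        + ennreal w * emeasure unif01 {b..1}"
    by (simp only: nn_integral_add nn_integral_cmult_indicator sets_uniform_measure sets_lborel
        borel_measurable_add borel_measurable_times_ennreal borel_measurable_indicator
        borel_measurable_const atLeastLessThan_borel atLeastAtMost_borel)
  also have "\<dots> = ennreal (a * u + (b - a) * v + (1 - b) * w)"
  proof -
    have "{0..1} \<inter> {0..<a} = {0..<a}" "{0..1} \<inter> {a..<b} = {a..<b}"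
      using assms by auto
    then show ?thesis
      using assms by (simp add: divide_ennreal_def ennreal_mult' mult.commute)
  qed
  finally show ?thesis .
qed

lemma (in sequence_space) emeasure_eq_nn_integral_case_nat:
  assumes X: "X \<in> sets S"
  shows "emeasure S X = (\<integral>\<^sup>+ s. emeasure S {\<omega> \<in> space S. case_nat s \<omega> \<in> X} \<partial>M)"
proof -
  have cn: "(\<lambda>(s, \<omega>). case_nat s \<omega>) \<in> measurable (M \<Otimes>\<^sub>M S) S"
    by measurable
  have "emeasure S X = emeasure (M \<Otimes>\<^sub>M S) ((\<lambda>(s, \<omega>). case_nat s \<omega>) -` X \<inter> space (M \<Otimes>\<^sub>M S))"
    by (subst PiM_iter[symmetric]) (rule emeasure_distr[OF cn X])
  also have "\<dots> = (\<integral>\<^sup>+ s. emeasure S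
      (Pair s -` ((\<lambda>(s, \<omega>). case_nat s \<omega>) -` X \<inter> space (M \<Otimes>\<^sub>M S))) \<partial>M)"
    by (rule P.emeasure_pair_measure_alt) (rule measurable_sets[OF cn X])
  also have "\<dots> = (\<integral>\<^sup>+ s. emeasure S {\<omega> \<in> space S. case_nat s \<omega> \<in> X} \<partial>M)"
    by (intro nn_integral_cong arg_cong[where f="emeasure S"]) (auto simp: space_pair_measure)
  finally show ?thesis .
qed

definition bd_up_prob :: "real \<Rightarrow> real \<Rightarrow> nat \<Rightarrow> real" where
  "bd_up_prob \<gamma>1 \<gamma>2 x = \<gamma>1 / (\<gamma>1 + \<gamma>2 * real x)"

definition bd_move :: "real \<Rightarrow> real \<Rightarrow> real \<Rightarrow> nat \<Rightarrow> nat" where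
  "bd_move \<gamma>1 \<gamma>2 s x = (if s < bd_up_prob \<gamma>1 \<gamma>2 x then x + 1 else x - 1)"

lemma bd_step_eq_move: "bd_step \<gamma>1 \<gamma>2 q x = bd_move \<gamma>1 \<gamma>2 (q 0) x"
  by (simp add: bd_step_def bd_move_def bd_up_prob_def)

lemma funpow_theta: "(theta ^^ n) q = (\<lambda>k. q (k + n))"
  by (induction n arbitrary: q) (auto simp: theta_def)

lemma bd_cocycle_Suc_shift:
  "bd_cocycle \<gamma>1 \<gamma>2 (Suc n) q x = bd_cocycle \<gamma>1 \<gamma>2 n (theta q) (bd_step \<gamma>1 \<gamma>2 q x)"
  by (induction n) (simp_all add: funpow_swap1)

lemma measurable_bd_cocycle [measurable]:
  "(\<lambda>q. bd_cocycle \<gamma>1 \<gamma>2 n q x) \<in> measurable noise (count_space UNIV)"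
proof (induction n)
  case 0
  then show ?case by simp
next
  case (Suc n)
  have "(\<lambda>q. bd_move \<gamma>1 \<gamma>2 (q n) i) \<in> measurable noise (count_space UNIV)" for i
    unfolding bd_move_def noise_def by measurable
  with Suc show ?case
    by (simp add: bd_step_eq_move funpow_theta measurable_compose_countable'[where I=UNIV])
qed

definition avoids_diag :: "real \<Rightarrow> real \<Rightarrow> nat \<Rightarrow> nat \<Rightarrow> (nat \<Rightarrow> real) set" where
  "avoids_diag \<gamma>1 \<gamma>2 x y =
     {q. \<forall>n. (bd_cocycle \<gamma>1 \<gamma>2 n q x, bd_cocycle \<gamma>1 \<gamma>2 n q y) \<notin> thick_diag}"

lemma sets_avoids_diag [measurable]: "avoids_diag \<gamma>1 \<gamma>2 x y \<in> sets noise"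
proof -
  have "avoids_diag \<gamma>1 \<gamma>2 x y =
      {q \<in> space noise. \<forall>n. (bd_cocycle \<gamma>1 \<gamma>2 n q x, bd_cocycle \<gamma>1 \<gamma>2 n q y) \<notin> thick_diag}"
    by (simp add: avoids_diag_def)
  also have "\<dots> \<in> sets noise"
    by measurable
  finally show ?thesis .
qed

lemma thick_diag_swap: "(y, x) \<in> thick_diag \<longleftrightarrow> (x, y) \<in> thick_diag"
  unfolding thick_diag_def by auto

lemma avoids_diag_swap: "avoids_diag \<gamma>1 \<gamma>2 x y = avoids_diag \<gamma>1 \<gamma>2 y x"
  unfolding avoids_diag_def using thick_diag_swap by blast

lemma avoids_diag_thick_diag: "(x, y) \<in> thick_diag \<Longrightarrow> avoids_diag \<gamma>1 \<gamma>2 x y = {}"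
  unfolding avoids_diag_def by (auto intro!: exI[where x=0])

lemma mem_avoids_diag_iff:
  "q \<in> avoids_diag \<gamma>1 \<gamma>2 x y \<longleftrightarrow> (x, y) \<notin> thick_diag \<and>
     theta q \<in> avoids_diag \<gamma>1 \<gamma>2 (bd_step \<gamma>1 \<gamma>2 q x) (bd_step \<gamma>1 \<gamma>2 q y)"
proof -
  have all_nat: "(\<forall>n. P n) \<longleftrightarrow> P 0 \<and> (\<forall>n. P (Suc n))" for P :: "nat \<Rightarrow> bool"
    by (metis not0_implies_Suc)
  show ?thesis
    unfolding avoids_diag_def mem_Collect_eq
    by (subst all_nat) (simp only: bd_cocycle.simps(1) bd_cocycle_Suc_shift)
qed

lemma emeasure_avoids_diag_step:
  "emeasure noise (avoids_diag \<gamma>1 \<gamma>2 x y) =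
     (if (x, y) \<in> thick_diag then 0 else
      \<integral>\<^sup>+ s. emeasure noise (avoids_diag \<gamma>1 \<gamma>2 (bd_move \<gamma>1 \<gamma>2 s x) (bd_move \<gamma>1 \<gamma>2 s y)) \<partial>unif01)"
proof -
  have "{\<omega>. case_nat s \<omega> \<in> avoids_diag \<gamma>1 \<gamma>2 x y} =
      (if (x, y) \<in> thick_diag then {}
       else avoids_diag \<gamma>1 \<gamma>2 (bd_move \<gamma>1 \<gamma>2 s x) (bd_move \<gamma>1 \<gamma>2 s y))" for s
    by (subst mem_avoids_diag_iff) (simp add: theta_def bd_step_eq_move)
  then show ?thesis
    using sequence_space.emeasure_eq_nn_integral_case_nat
      [OF sequence_space_unif01 sets_avoids_diag[unfolded noise_def]]
    by (simp add: noise_def[symmetric])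
qed

locale up_prob =
  fixes p :: "nat \<Rightarrow> real"
  assumes nonneg: "0 \<le> p x" and le_1: "p x \<le> 1"
    and strict_decreasing: "x < y \<Longrightarrow> p y < p x"

lemma up_prob_bd_up_prob:
  assumes "\<gamma>1 > 0" "\<gamma>2 > 0"
  shows "up_prob (bd_up_prob \<gamma>1 \<gamma>2)"
proof
  fix x y :: nat
  have pos: "0 < \<gamma>1 + \<gamma>2 * real z" for z
    using assms by (simp add: add_pos_nonneg)
  show "0 \<le> bd_up_prob \<gamma>1 \<gamma>2 x" "bd_up_prob \<gamma>1 \<gamma>2 x \<le> 1"
    using assms pos[of x] by (simp_all add: bd_up_prob_def)
  assume "x < y"
  then show "bd_up_prob \<gamma>1 \<gamma>2 y < bd_up_prob \<gamma>1 \<gamma>2 x"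
    using assms pos unfolding bd_up_prob_def by (intro divide_strict_left_mono) simp_all
qed

lemma bd_up_prob_le_half:
  assumes "\<gamma>1 > 0" "\<gamma>2 > 0" "nat \<lceil>\<gamma>1 / \<gamma>2\<rceil> \<le> y"
  shows "2 * bd_up_prob \<gamma>1 \<gamma>2 y \<le> 1"
proof -
  have "\<gamma>1 / \<gamma>2 \<le> real y"
    using assms(3) by linarith
  then have "\<gamma>1 \<le> \<gamma>2 * real y"
    using assms by (simp add: field_simps)
  then show ?thesis
    using assms by (simp add: bd_up_prob_def field_simps add_pos_nonneg)
qed

text \<open>The mean of h after one step of the two-point motion started at x < y: both points are
  driven by the same uniform s, and p y < p x.  For x = 0 the last term is junk (0 - 1 = 0), but
  its weight 1 - p 0 vanishes for the birth-death chain.\<close>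
definition two_point_mean :: "(nat \<Rightarrow> real) \<Rightarrow> (nat \<Rightarrow> nat \<Rightarrow> real) \<Rightarrow> nat \<Rightarrow> nat \<Rightarrow> real" where
  "two_point_mean p h x y =
     p y * h (x + 1) (y + 1) + (p x - p y) * h (x + 1) (y - 1) + (1 - p x) * h (x - 1) (y - 1)"

lemma measure_avoids_diag_two_point_mean:
  assumes "\<gamma>1 > 0" "\<gamma>2 > 0" "x + 2 \<le> y"
  shows "measure noise (avoids_diag \<gamma>1 \<gamma>2 x y) =
    two_point_mean (bd_up_prob \<gamma>1 \<gamma>2) (\<lambda>a b. measure noise (avoids_diag \<gamma>1 \<gamma>2 a b)) x y"
    (is "?G x y = two_point_mean ?p ?G x y")
proof -
  interpret up_prob ?p
    using assms(1,2) by (rule up_prob_bd_up_prob)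
  interpret noise: prob_space noise
    by (rule prob_space_noise)
  have "?p y < ?p x"
    using assms(3) by (intro strict_decreasing) simp
  have "(x, y) \<notin> thick_diag"
    using assms(3) by (auto simp: thick_diag_def)
  then have "ennreal (?G x y) =
      (\<integral>\<^sup>+ s. ennreal (?G (bd_move \<gamma>1 \<gamma>2 s x) (bd_move \<gamma>1 \<gamma>2 s y)) \<partial>unif01)"
    by (simp add: emeasure_avoids_diag_step[of \<gamma>1 \<gamma>2 x y] noise.emeasure_eq_measure[symmetric])
  also have "\<dots> = (\<integral>\<^sup>+ s. ennreal (if s < ?p y then ?G (x + 1) (y + 1)
                      else if s < ?p x then ?G (x + 1) (y - 1) else ?G (x - 1) (y - 1)) \<partial>unif01)"
    using \<open>?p y < ?p x\<close> by (intro nn_integral_cong) (auto simp: bd_move_def)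
  also have "\<dots> = ennreal (two_point_mean ?p ?G x y)"
    using \<open>?p y < ?p x\<close> nonneg le_1
    by (subst nn_integral_unif01_step) (auto simp: two_point_mean_def less_imp_le)
  finally show ?thesis
    using \<open>?p y < ?p x\<close> nonneg le_1 unfolding two_point_mean_def
    by (subst (asm) ennreal_inj) (auto intro!: add_nonneg_nonneg mult_nonneg_nonneg)
qed

section \<open>A maximum principle for the two-point chain\<close>

lemma two_point_mean_minus_linear:
  assumes "1 \<le> y"
  shows "two_point_mean p (\<lambda>a b. h a b - e * real b) x y =
    two_point_mean p h x y - e * (real y - 1 + 2 * p y)"
  using assms by (simp add: two_point_mean_def of_nat_diff algebra_simps)

context up_prob
begin

lemma max_moves_inward:
  assumes le_m: "\<And>x y. x \<le> y \<Longrightarrow> h x y \<le> m"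
    and "x + 2 \<le> y" and "m \<le> two_point_mean p h x y"
  shows "h (x + 1) (y - 1) = m"
proof -
  have w: "0 \<le> p y" "0 < p x - p y" "0 \<le> 1 - p x"
    using nonneg le_1 strict_decreasing[of x y] assms(2) by auto
  have "two_point_mean p h x y \<le> p y * m + (p x - p y) * h (x + 1) (y - 1) + (1 - p x) * m"
    unfolding two_point_mean_def using le_m w assms(2)
    by (intro add_mono mult_left_mono) auto
  with assms(3) have "(p x - p y) * m \<le> (p x - p y) * h (x + 1) (y - 1)"
    by (simp add: algebra_simps)
  then have "m \<le> h (x + 1) (y - 1)"
    using w(2) by simp
  moreover have "h (x + 1) (y - 1) \<le> m"
    using le_m assms(2) by simp
  ultimately show ?thesis
    by simp
qed

lemma max_reaches_boundary:
  assumes le_m: "\<And>x y. x \<le> y \<Longrightarrow> h x y \<le> m"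
    and sub: "\<And>x y. x + 2 \<le> y \<Longrightarrow> B \<le> y \<Longrightarrow> h x y \<le> two_point_mean p h x y"
    and "x \<le> y" "h x y = m"
  shows "\<exists>x' y'. x' \<le> y' \<and> h x' y' = m \<and> (y' \<le> x' + 1 \<or> y' < B)"
  using assms(3,4)
proof (induction y arbitrary: x rule: less_induct)
  case (less y)
  show ?case
  proof (cases "y \<le> x + 1 \<or> y < B")
    case True
    with less.prems show ?thesis
      by blast
  next
    case False
    then have "x + 2 \<le> y" "B \<le> y"
      by auto
    with less.prems sub have "h (x + 1) (y - 1) = m"
      by (intro max_moves_inward[OF le_m]) auto
    with less.IH[of "y - 1" "x + 1"] \<open>x + 2 \<le> y\<close> show ?thesis
      by auto
  qed
qed

lemma perturbed_le_max_near_boundary: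
  assumes half: "\<And>y. B \<le> y \<Longrightarrow> 2 * p y \<le> 1"
    and bounded: "\<And>x y. h x y \<le> K"
    and near_diag: "\<And>x y. x \<le> y \<Longrightarrow> y \<le> x + 1 \<Longrightarrow> h x y \<le> c"
    and below: "\<And>x y. x \<le> y \<Longrightarrow> y < B \<Longrightarrow> h x y \<le> c"
    and sub: "\<And>x y. x + 2 \<le> y \<Longrightarrow> B \<le> y \<Longrightarrow> h x y \<le> two_point_mean p h x y"
    and "0 < e" "x \<le> y"
  shows "h x y - e * real y \<le> c"
proof -
  define h' where "h' a b = h a b - e * real b" for a b
  obtain N :: nat where "(K - c) / e \<le> real N"
    using real_arch_simple by blast
  then have N: "K - c \<le> e * real N"
    using \<open>0 < e\<close> by (simp add: pos_divide_le_eq mult.commute)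
  define T where "T = {(a, b). a \<le> b \<and> b \<le> N}"
  define m where "m = max c (Max ((\<lambda>(a, b). h' a b) ` T))"
  have "finite T"
    unfolding T_def by (rule finite_subset[of _ "{..N} \<times> {..N}"]) auto
  have "(0, 0) \<in> T"
    by (simp add: T_def)
  have le_m: "h' a b \<le> m" if "a \<le> b" for a b
  proof (cases "b \<le> N")
    case True
    with that \<open>finite T\<close> have "h' a b \<le> Max ((\<lambda>(a, b). h' a b) ` T)"
      by (intro Max_ge) (auto simp: T_def)
    then show ?thesis
      by (simp add: m_def)
  next
    case False
    then have "e * real N \<le> e * real b"
      using \<open>0 < e\<close> by simp
    then show ?thesis
      using N bounded[of a b] by (simp add: h'_def m_def)
  qed
  have sub': "h' a b \<le> two_point_mean p h' a b" if "a + 2 \<le> b" "B \<le> b" for a b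
  proof -
    have "e * (real b - 1 + 2 * p b) \<le> e * real b"
      using half[OF that(2)] \<open>0 < e\<close> by simp
    then show ?thesis
      using sub[OF that] that unfolding h'_def
      by (subst two_point_mean_minus_linear) auto
  qed
  have "m \<le> c"
  proof (rule ccontr)
    assume "\<not> m \<le> c"
    then have "m \<in> (\<lambda>(a, b). h' a b) ` T"
      using \<open>finite T\<close> \<open>(0, 0) \<in> T\<close> by (auto simp: m_def max_def intro!: Max_in)
    then obtain a b where "a \<le> b" "h' a b = m"
      by (auto simp: T_def)
    from max_reaches_boundary[OF le_m sub' this]
    obtain x' y' where "x' \<le> y'" "h' x' y' = m" "y' \<le> x' + 1 \<or> y' < B"
      by blast
    then have "h x' y' \<le> c"
      using near_diag below by blast
    moreover have "0 \<le> e * real y'"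
      using \<open>0 < e\<close> by simp
    ultimately have "m \<le> c"
      using \<open>h' x' y' = m\<close> by (simp add: h'_def)
    with \<open>\<not> m \<le> c\<close> show False ..
  qed
  with le_m[OF \<open>x \<le> y\<close>] show ?thesis
    by (simp add: h'_def)
qed

lemma le_max_near_boundary:
  assumes half: "\<And>y. B \<le> y \<Longrightarrow> 2 * p y \<le> 1"
    and bounded: "\<And>x y. h x y \<le> K"
    and near_diag: "\<And>x y. x \<le> y \<Longrightarrow> y \<le> x + 1 \<Longrightarrow> h x y \<le> c"
    and below: "\<And>x y. x \<le> y \<Longrightarrow> y < B \<Longrightarrow> h x y \<le> c"
    and sub: "\<And>x y. x + 2 \<le> y \<Longrightarrow> B \<le> y \<Longrightarrow> h x y \<le> two_point_mean p h x y"
    and "x \<le> y"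
  shows "h x y \<le> c"
proof (rule field_le_epsilon)
  fix e :: real
  assume "0 < e"
  then have "0 < e / (real y + 1)"
    by (intro divide_pos_pos) auto
  then have "h x y - e / (real y + 1) * real y \<le> c"
    using perturbed_le_max_near_boundary[OF half bounded near_diag below sub _ \<open>x \<le> y\<close>]
    by blast
  moreover have "e / (real y + 1) * real y \<le> e"
    using \<open>0 < e\<close> by (simp add: field_simps)
  ultimately show "h x y \<le> c + e"
    by simp
qed

lemma subharmonic_nonpos:
  assumes half: "\<And>y. B \<le> y \<Longrightarrow> 2 * p y \<le> 1"
    and bounded: "\<And>x y. h x y \<le> K"
    and near_diag: "\<And>x y. x \<le> y \<Longrightarrow> y \<le> x + 1 \<Longrightarrow> h x y \<le> 0"
    and sub: "\<And>x y. x + 2 \<le> y \<Longrightarrow> h x y \<le> two_point_mean p h x y"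
    and "x \<le> y"
  shows "h x y \<le> 0"
proof -
  define R where "R = {(a, b). a \<le> b \<and> b < B}"
  define c where "c = Max (insert 0 ((\<lambda>(a, b). h a b) ` R))"
  have "finite R"
    unfolding R_def by (rule finite_subset[of _ "{..B} \<times> {..B}"]) auto
  have "0 \<le> c"
    using \<open>finite R\<close> by (simp add: c_def)
  have le_c: "h a b \<le> c" if "a \<le> b" for a b
  proof (rule le_max_near_boundary[OF half bounded _ _ sub that])
    show "h a b \<le> c" if "a \<le> b" "b \<le> a + 1" for a b
      using near_diag[OF that] \<open>0 \<le> c\<close> by simp
    show "h a b \<le> c" if "a \<le> b" "b < B" for a b
      using that \<open>finite R\<close> unfolding c_def by (intro Max_ge) (auto simp: R_def)
  qed
  have "c \<le> 0"
  proof (rule ccontr)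
    assume "\<not> c \<le> 0"
    have "c \<in> insert 0 ((\<lambda>(a, b). h a b) ` R)"
      unfolding c_def using \<open>finite R\<close> by (intro Max_in) auto
    with \<open>\<not> c \<le> 0\<close> have "c \<in> (\<lambda>(a, b). h a b) ` R"
      by auto
    then obtain a b where "a \<le> b" "h a b = c"
      by (auto simp: R_def)
    from max_reaches_boundary[where B = 0, OF le_c sub this]
    obtain x' y' where "x' \<le> y'" "y' \<le> x' + 1" "h x' y' = c"
      by auto
    with near_diag \<open>\<not> c \<le> 0\<close> show False
      by fastforce
  qed
  with le_c[OF \<open>x \<le> y\<close>] show ?thesis
    by simp
qed

end

lemma measure_avoids_diag_eq_0:
  assumes "\<gamma>1 > 0" "\<gamma>2 > 0"
  shows "measure noise (avoids_diag \<gamma>1 \<gamma>2 x y) = 0"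
proof -
  interpret up_prob "bd_up_prob \<gamma>1 \<gamma>2"
    using assms by (rule up_prob_bd_up_prob)
  interpret noise: prob_space noise
    by (rule prob_space_noise)
  have "measure noise (avoids_diag \<gamma>1 \<gamma>2 a b) \<le> 0" if "a \<le> b" for a b
  proof (rule subharmonic_nonpos[OF _ noise.prob_le_1 _ _ that])
    show "2 * bd_up_prob \<gamma>1 \<gamma>2 y \<le> 1" if "nat \<lceil>\<gamma>1 / \<gamma>2\<rceil> \<le> y" for y
      using assms that by (rule bd_up_prob_le_half)
    show "measure noise (avoids_diag \<gamma>1 \<gamma>2 x y) \<le> 0" if "x \<le> y" "y \<le> x + 1" for x y
    proof -
      have "(x, y) \<in> thick_diag"
        using that by (auto simp: thick_diag_def)
      then show ?thesis
        by (simp add: avoids_diag_thick_diag)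
    qed
    show "measure noise (avoids_diag \<gamma>1 \<gamma>2 x y) \<le>
        two_point_mean (bd_up_prob \<gamma>1 \<gamma>2) (\<lambda>a b. measure noise (avoids_diag \<gamma>1 \<gamma>2 a b)) x y"
      if "x + 2 \<le> y" for x y
      using assms that by (simp add: measure_avoids_diag_two_point_mean)
  qed
  then show ?thesis
    by (metis avoids_diag_swap measure_nonneg nle_le order_antisym)
qed

theorem proposition3p3:
  fixes \<gamma>1 \<gamma>2 :: real and x0 y0 :: nat
  assumes "\<gamma>1 > 0" and "\<gamma>2 > 0"
  shows "measure noise
           {q \<in> space noise. \<exists>n. (bd_cocycle \<gamma>1 \<gamma>2 n q x0, bd_cocycle \<gamma>1 \<gamma>2 n q y0) \<in> thick_diag} = 1"
proof -
  interpret noise: prob_space noise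
    by (rule prob_space_noise)
  have "{q \<in> space noise. \<exists>n. (bd_cocycle \<gamma>1 \<gamma>2 n q x0, bd_cocycle \<gamma>1 \<gamma>2 n q y0) \<in> thick_diag}
      = space noise - avoids_diag \<gamma>1 \<gamma>2 x0 y0"
    by (auto simp: avoids_diag_def)
  then show ?thesis
    using noise.prob_compl[OF sets_avoids_diag] measure_avoids_diag_eq_0[OF assms] by simp
qed

end
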